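(* Let $j\ge 3$ be an integer and let $\bar\alpha_j$ be the largest $\alpha\ge 0$ such that $\left(1-e^{-\alpha jx}\right)^{j-2}\left(1+(j-2)e^{-\alpha jx}\right)\le x$ for all $x\in(0,1]$. For $\alpha>0$ and an integer $k>\alpha j$, let $\delta=\alpha j/k$, $\lambda(z)=z^{j-1}$, $\rho(z)=z^{k-1}$, and define $x_0=\delta$ and $$x_{i+1}=\delta\Bigl(\lambda\bigl(1-\rho(1-x_i)\bigr)+\lambda'\bigl(1-\rho(1-x_i)\bigr)\bigl(\rho(1-x_i)-\rho\bigl(1-(1-\delta)\lambda(1-\rho(1-x_i))-x_i\bigr)\bigr)\Bigr),$$ where $\lambda'(z)=(j-1)z^{j-2}$. (a) If $\alpha<\bar\alpha_j$, there exists $K_1<\infty$ such that for all $k\ge K_1$, $x_i\to 0$ as $i\to\infty$. (b) If $\alpha>\bar\alpha_j$, there exists $K_2<\infty$ such that for all $k\ge K_2$, $x_i$ does not converge to $0$.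
   Context: The recursion is the message-based density evolution of the LM2 verification-decoding algorithm (LM2-MB) for a $(j,k)$-regular LDPC code on the $q$-ary symmetric channel with error probability $\delta$ (equivalently, reconstruction of a strictly sparse signal with fraction $\delta$ of nonzero entries); $x_i$ is the fraction of unverified messages, and $x_i\to 0$ corresponds to successful decoding with high probability as the block length tends to infinity. *)

theory Defs
  imports Complex_Main
begin

definition alpha_bar :: "nat \<Rightarrow> real" where
  "alpha_bar j = (GREATEST \<alpha>. \<alpha> \<ge> 0 \<and>
     (\<forall>x\<in>{0<..1}. (1 - exp (- \<alpha> * real j * x)) ^ (j - 2)
                     * (1 + real (j - 2) * exp (- \<alpha> * real j * x)) \<le> x))"

definition lam :: "nat \<Rightarrow> real \<Rightarrow> real" where
  "lam j z = z ^ (j - 1)"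

definition lam' :: "nat \<Rightarrow> real \<Rightarrow> real" where
  "lam' j z = real (j - 1) * z ^ (j - 2)"

definition rho :: "nat \<Rightarrow> real \<Rightarrow> real" where
  "rho k z = z ^ (k - 1)"

definition lm2_step :: "nat \<Rightarrow> nat \<Rightarrow> real \<Rightarrow> real \<Rightarrow> real" where
  "lm2_step j k \<delta> x =
     (let r = rho k (1 - x); y = 1 - r in
      \<delta> * (lam j y + lam' j y * (r - rho k (1 - (1 - \<delta>) * lam j y - x))))"

fun lm2_seq :: "nat \<Rightarrow> nat \<Rightarrow> real \<Rightarrow> nat \<Rightarrow> real" where
  "lm2_seq j k \<delta> 0 = \<delta>"
| "lm2_seq j k \<delta> (Suc i) = lm2_step j k \<delta> (lm2_seq j k \<delta> i)"

end

theory Submission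
  imports Defs "HOL-Analysis.Elementary_Metric_Spaces"
begin

(* Write y = 1 - rho(1 - x) and w = 1 - (1 - delta) lambda(y) - x.  One step of the
   recursion is  x' = delta (phi_j(y) - lambda'(y) w^(k-1)),  where
   phi_j(y) = lambda(y) + lambda'(y)(1 - y) = y^(j-1) + (j-1) y^(j-2) (1 - y)
   is increasing on [0,1] for j >= 3.  Along the rescaled orbit s_i = x_i / delta, where
   delta = c / k with c = alpha j, we have y ~ 1 - exp(-c s) and w^(k-1) -> 0 as k -> infinity,
   so the rescaled recursion approaches  s |-> phi_j(1 - exp(-c s)).  The threshold alpha_bar_j is
   exactly the largest alpha for which this limit map stays below the diagonal on (0,1].
   (a) For alpha < alpha_bar_j and k large, s_{i+1} <= F(s_i) for a continuous F with F(s) < s on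
       (0,1]; a general lemma on such majorised iterations gives s_i -> 0.
   (b) For alpha > alpha_bar_j there is s0 in (0,1] with phi_j(1 - exp(-c s0)) > s0; for k large the
       lower bound on the step keeps x_i >= delta s0 forever, so x_i does not tend to 0.
   The file first studies phi_j and the threshold, then the one-step identity and bounds,
   then the analytic estimates and limits, then parts (a) and (b), and finally the theorem. *)

section \<open>The limiting polynomial\<close>

text \<open>The bracket of the recursion once the check-node term \<open>w^(k-1)\<close> has vanished.\<close>
definition phi :: "nat \<Rightarrow> real \<Rightarrow> real" where
  "phi j y = lam j y + lam' j y * (1 - y)"

text \<open>The threshold inequality of the paper is the statement \<open>phi j (1 - t) \<le> x\<close>.\<close>
lemma phi_one_minus:
  assumes "2 \<le> j"
  shows "phi j (1 - t) = (1 - t) ^ (j - 2) * (1 + real (j - 2) * t)"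
proof -
  obtain n where j: "j = Suc (Suc n)" using assms by (metis add_2_eq_Suc le_Suc_ex)
  show ?thesis unfolding phi_def lam_def lam'_def j by (simp add: algebra_simps)
qed

lemma phi_deriv:
  assumes "j = Suc (Suc (Suc p))"
  shows "DERIV (phi j) y :> real (p + 2) * real (Suc p) * y ^ p * (1 - y)"
  unfolding phi_def lam_def lam'_def assms
  by (rule derivative_eq_intros refl | simp add: algebra_simps)+

lemma continuous_on_phi [continuous_intros]:
  "continuous_on A f \<Longrightarrow> continuous_on A (\<lambda>x. phi j (f x))"
  unfolding phi_def lam_def lam'_def by (intro continuous_intros)

lemma tendsto_phi [tendsto_intros]:
  "(f \<longlongrightarrow> l) F \<Longrightarrow> ((\<lambda>x. phi j (f x)) \<longlongrightarrow> phi j l) F"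
  unfolding phi_def lam_def lam'_def by (intro tendsto_intros)

text \<open>For \<open>j \<ge> 3\<close> the derivative is positive on (0,1), so phi is strictly increasing.\<close>
lemma phi_strict_mono:
  assumes "3 \<le> j" "0 \<le> a" "a < b" "b \<le> 1"
  shows "phi j a < phi j b"
proof -
  obtain p where j: "j = Suc (Suc (Suc p))"
    using assms(1) by (metis Suc_eq_plus1 add.commute le_Suc_ex numeral_3_eq_3 add_Suc_right)
  show ?thesis
  proof (rule DERIV_pos_imp_increasing_open[OF assms(3)])
    fix y assume "a < y" "y < b"
    then show "\<exists>d. DERIV (phi j) y :> d \<and> 0 < d"
      using assms phi_deriv[OF j] by (intro exI conjI) (auto intro!: mult_pos_pos)
  qed (intro continuous_intros continuous_on_id)
qed

lemma phi_mono: "3 \<le> j \<Longrightarrow> 0 \<le> a \<Longrightarrow> a \<le> b \<Longrightarrow> b \<le> 1 \<Longrightarrow> phi j a \<le> phi j b"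
  using phi_strict_mono[of j a b] by (cases "a = b") auto

lemma phi_0: "3 \<le> j \<Longrightarrow> phi j 0 = 0"
  by (simp add: phi_def lam_def lam'_def power_0_left)

lemma phi_1: "phi j 1 = 1"
  by (simp add: phi_def lam_def)

lemma phi_le_1: "3 \<le> j \<Longrightarrow> 0 \<le> y \<Longrightarrow> y \<le> 1 \<Longrightarrow> phi j y \<le> 1"
  using phi_mono[of j y 1] by (simp add: phi_1)

section \<open>The threshold\<close>

definition admissible :: "nat \<Rightarrow> real \<Rightarrow> bool" where
  "admissible j a \<longleftrightarrow> 0 \<le> a \<and> (\<forall>x\<in>{0<..1}. phi j (1 - exp (- a * real j * x)) \<le> x)"

text \<open>Evaluating at \<open>x = 1/2\<close> and using Bernoulli's inequality bounds admissible
  exponents; this is what makes the GREATEST in the definition of the threshold exist.\<close>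
lemma admissible_bounded:
  assumes "2 \<le> j" "admissible j a"
  shows "a \<le> 4 * real (j - 2)"
proof -
  define t where "t = exp (- a * real j * (1/2))"
  have a: "0 \<le> a" using assms(2) by (simp add: admissible_def)
  have t: "0 < t" "t \<le> 1" using a by (auto simp: t_def)
  have "(1 - t) ^ (j - 2) \<le> (1 - t) ^ (j - 2) * (1 + real (j - 2) * t)"
    using t by (simp add: mult_le_cancel_left1)
  also have "\<dots> = phi j (1 - t)" using phi_one_minus[OF assms(1)] by simp
  also have "\<dots> \<le> 1/2"
    using assms(2) unfolding admissible_def t_def by (elim conjE) (drule bspec[of _ _ "1/2"], auto)
  finally have "(1 - t) ^ (j - 2) \<le> 1/2" .
  moreover have "1 - real (j - 2) * t \<le> (1 - t) ^ (j - 2)"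
    using Bernoulli_inequality[of "- t" "j - 2"] t by simp
  ultimately have nt: "1 \<le> 2 * real (j - 2) * t" by linarith
  have "exp (a * real j / 2) * 1 \<le> exp (a * real j / 2) * (2 * real (j - 2) * t)"
    by (rule mult_left_mono[OF nt]) simp
  also have "\<dots> = 2 * real (j - 2) * (exp (a * real j / 2) * t)" by (simp add: algebra_simps)
  also have "exp (a * real j / 2) * t = 1" by (simp add: t_def exp_add[symmetric])
  finally have "1 + a * real j / 2 \<le> 2 * real (j - 2)"
    using exp_ge_add_one_self[of "a * real j / 2"] by linarith
  moreover have "a \<le> a * real j" using a assms(1) by (simp add: mult_le_cancel_left1)
  ultimately show ?thesis by simp
qed

text \<open>The admissible exponents form a closed, bounded set containing 0, so the threshold
  is attained and is an upper bound of all admissible exponents.\<close>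
lemma alpha_bar_greatest:
  assumes "3 \<le> j"
  shows "admissible j (alpha_bar j)" and "admissible j b \<Longrightarrow> b \<le> alpha_bar j"
proof -
  have j2: "2 \<le> j" using assms by simp
  have adm_eq: "admissible j a \<longleftrightarrow> 0 \<le> a \<and> (\<forall>x\<in>{0<..1}. (1 - exp (- a * real j * x)) ^ (j - 2)
                 * (1 + real (j - 2) * exp (- a * real j * x)) \<le> x)" for a
    unfolding admissible_def phi_one_minus[OF j2] ..
  have closed: "closed (Collect (admissible j))"
  proof -
    have "Collect (admissible j) = {a. 0 \<le> a} \<inter>
        (\<Inter>x\<in>{0<..1}. {a. phi j (1 - exp (- a * real j * x)) \<le> x})"
      unfolding admissible_def by auto
    then show ?thesis
      by (simp only:) (intro closed_Int closed_INT ballI closed_Collect_le continuous_intros)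
  qed
  have bdd: "bdd_above (Collect (admissible j))"
    using admissible_bounded[OF j2] by (intro bdd_aboveI) auto
  have "admissible j 0" using phi_0[OF assms] by (simp add: admissible_def)
  then have adm_Sup: "admissible j (Sup (Collect (admissible j)))"
    using closed_contains_Sup[OF _ bdd closed] by auto
  have "alpha_bar j = (GREATEST a. admissible j a)"
    unfolding alpha_bar_def adm_eq ..
  also have "\<dots> = Sup (Collect (admissible j))"
    using adm_Sup bdd by (intro Greatest_equality) (auto intro: cSup_upper)
  finally have eq: "alpha_bar j = Sup (Collect (admissible j))" .
  show "admissible j (alpha_bar j)" using adm_Sup eq by simp
  show "admissible j b \<Longrightarrow> b \<le> alpha_bar j" using bdd eq by (auto intro: cSup_upper)
qed

section \<open>One step of the recursion\<close>

lemma lm2_step_eq: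
  "lm2_step j k \<delta> x =
     \<delta> * (phi j (1 - rho k (1 - x))
          - lam' j (1 - rho k (1 - x))
            * rho k (1 - (1 - \<delta>) * lam j (1 - rho k (1 - x)) - x))"
  unfolding lm2_step_def phi_def Let_def by (simp add: algebra_simps)

lemma lm2_step_bounds:
  assumes "0 < \<delta>" "\<delta> < 1" "0 \<le> x" "x \<le> \<delta>"
    and y: "y = 1 - (1 - x) ^ (k - 1)" and w: "w = 1 - (1 - \<delta>) * lam j y - x"
  shows "0 \<le> y" "y \<le> 1" "0 \<le> w"
    and "lm2_step j k \<delta> x \<le> \<delta> * phi j y"
    and "\<delta> * (phi j y - real (j - 1) * w ^ (k - 1)) \<le> lm2_step j k \<delta> x"
    and "0 \<le> lm2_step j k \<delta> x"
proof -
  have r: "0 \<le> (1 - x) ^ (k - 1)" "(1 - x) ^ (k - 1) \<le> 1"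
    using assms(2-4) by (simp_all add: power_le_one)
  show y0: "0 \<le> y" and y1: "y \<le> 1" using r unfolding y by linarith+
  have lam: "0 \<le> lam j y" "lam j y \<le> 1"
    using y0 y1 unfolding lam_def by (simp_all add: power_le_one)
  have lam': "0 \<le> lam' j y" "lam' j y \<le> real (j - 1)"
    using y0 y1 unfolding lam'_def by (simp_all add: power_le_one mult_left_le)
  have "0 \<le> (1 - \<delta>) * lam j y" "(1 - \<delta>) * lam j y \<le> 1 - \<delta>"
    using lam assms(2) by (simp_all add: mult_left_le)
  then have w_bounds: "0 \<le> w" "w \<le> 1 - x" using assms(4) unfolding w by linarith+
  then show "0 \<le> w" by simp
  have wk: "0 \<le> w ^ (k - 1)" "w ^ (k - 1) \<le> 1 - y"
    using w_bounds unfolding y by (simp_all add: power_mono)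
  have eq: "lm2_step j k \<delta> x = \<delta> * (phi j y - lam' j y * w ^ (k - 1))"
    unfolding lm2_step_eq rho_def y w ..
  have "0 \<le> lam' j y * w ^ (k - 1)" using lam' wk by simp
  then show "lm2_step j k \<delta> x \<le> \<delta> * phi j y"
    unfolding eq using assms(1) by (simp add: mult_left_mono)
  have "lam' j y * w ^ (k - 1) \<le> real (j - 1) * w ^ (k - 1)"
    using lam' wk by (simp add: mult_right_mono)
  then show "\<delta> * (phi j y - real (j - 1) * w ^ (k - 1)) \<le> lm2_step j k \<delta> x"
    unfolding eq using assms(1) by (simp add: mult_left_mono)
  have "lam' j y * w ^ (k - 1) \<le> lam' j y * (1 - y)"
    using lam' wk by (simp add: mult_left_mono)
  then have "0 \<le> phi j y - lam' j y * w ^ (k - 1)"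
    using lam(1) unfolding phi_def by linarith
  then show "0 \<le> lm2_step j k \<delta> x"
    unfolding eq using assms(1) by simp
qed

lemma exp_le_one_minus_power:
  assumes "0 \<le> x" "x \<le> 1/2"
  shows "exp (- real k * (x + 2 * x\<^sup>2)) \<le> (1 - x) ^ (k - 1)"
proof -
  have e: "exp (- x - 2 * x\<^sup>2) \<le> 1 - x"
    using ln_one_minus_pos_lower_bound[OF assms] assms exp_le_cancel_iff[of "- x - 2 * x\<^sup>2" "ln (1 - x)"]
    by simp
  have "exp (- real k * (x + 2 * x\<^sup>2)) \<le> exp (- real (k - 1) * (x + 2 * x\<^sup>2))"
    using assms by (intro exp_mono mult_right_mono) auto
  also have "\<dots> = exp (- x - 2 * x\<^sup>2) ^ (k - 1)"
    by (subst exp_of_nat_mult[symmetric]) (simp add: algebra_simps)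
  also have "\<dots> \<le> (1 - x) ^ (k - 1)" using e by (intro power_mono) auto
  finally show ?thesis .
qed

lemma one_minus_power_le_exp:
  assumes "0 < c" "c < c'" "2 * c \<le> real k" "2 * c\<^sup>2 \<le> real k * (c' - c)"
    and "0 \<le> s" "s \<le> 1"
  shows "exp (- c' * s) \<le> (1 - c / real k * s) ^ (k - 1)"
proof -
  define \<delta> where "\<delta> = c / real k"
  have k: "0 < real k" using assms by simp
  have \<delta>: "0 < \<delta>" "\<delta> \<le> 1/2" "real k * \<delta> = c" using assms k by (auto simp: \<delta>_def field_simps)
  have "\<delta> * s \<le> \<delta>" using \<delta> assms(6) by (simp add: mult_left_le)
  then have "\<delta> * s \<le> 1/2" using \<delta>(2) by linarith
  have "2 * c * \<delta> \<le> c' - c" using assms(4) k by (simp add: \<delta>_def power2_eq_square field_simps)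
  moreover have "2 * c * \<delta> * s \<le> 2 * c * \<delta>"
    using assms(1,6) \<delta>(1) by (intro mult_left_le) auto
  ultimately have "2 * c * \<delta> * s * s \<le> (c' - c) * s"
    using assms(5) by (intro mult_right_mono) auto
  moreover have "real k * (\<delta> * s + 2 * (\<delta> * s)\<^sup>2) = (real k * \<delta>) * s + 2 * (real k * \<delta>) * \<delta> * s * s"
    by (simp add: power2_eq_square algebra_simps)
  ultimately have "real k * (\<delta> * s + 2 * (\<delta> * s)\<^sup>2) \<le> c' * s"
    unfolding \<delta>(3) by (simp add: algebra_simps)
  then have "exp (- c' * s) \<le> exp (- real k * (\<delta> * s + 2 * (\<delta> * s)\<^sup>2))" by simp
  also have "\<dots> \<le> (1 - \<delta> * s) ^ (k - 1)"
    using \<open>\<delta> * s \<le> 1/2\<close> \<delta>(1) assms(5) by (intro exp_le_one_minus_power) auto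
  finally show ?thesis by (simp add: \<delta>_def)
qed

lemma one_minus_over_power_limit:
  "(\<lambda>k. (1 - a / real k) ^ (k - 1)) \<longlonglongrightarrow> exp (- a)"
proof -
  have "(\<lambda>k. (1 + (- a) / real k) ^ k / (1 - a / real k)) \<longlonglongrightarrow> exp (- a) / (1 - 0)"
    by (intro tendsto_divide tendsto_diff tendsto_const lim_const_over_n
        tendsto_exp_limit_sequentially) simp
  moreover have "\<forall>\<^sub>F k in sequentially.
      (1 + (- a) / real k) ^ k / (1 - a / real k) = (1 - a / real k) ^ (k - 1)"
    unfolding eventually_sequentially
  proof (intro exI allI impI)
    fix k :: nat assume "nat \<lceil>\<bar>a\<bar>\<rceil> + 1 \<le> k"
    then have "\<bar>a\<bar> < real k" and k: "k = Suc (k - 1)" by linarith+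
    then have "1 - a / real k \<noteq> 0" by (auto simp: field_simps)
    moreover have "(1 + (- a) / real k) ^ k = (1 - a / real k) ^ (k - 1) * (1 - a / real k)"
      by (metis k diff_conv_add_uminus minus_divide_left power_Suc2)
    ultimately show "(1 + (- a) / real k) ^ k / (1 - a / real k) = (1 - a / real k) ^ (k - 1)"
      by simp
  qed
  ultimately show ?thesis by (auto intro: Lim_transform_eventually)
qed

lemma power_diag_tendsto_zero:
  fixes b :: "nat \<Rightarrow> real"
  assumes "b \<longlonglongrightarrow> l" "l < 1" "\<forall>\<^sub>F k in sequentially. 0 \<le> b k"
  shows "(\<lambda>k. b k ^ (k - 1)) \<longlonglongrightarrow> 0"
proof -
  define q where "q = (1 + max 0 l) / 2"
  have "0 \<le> max 0 l" "l \<le> max 0 l" "max 0 l < 1" using assms(2) by auto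
  then have q: "0 \<le> q" "q < 1" "l < q" by (simp_all add: q_def)
  have lim_q: "(\<lambda>k. q ^ (k - 1)) \<longlonglongrightarrow> 0"
    by (subst filterlim_sequentially_Suc[symmetric]) (simp add: LIMSEQ_power_zero q)
  have "\<forall>\<^sub>F k in sequentially. b k < q" using order_tendstoD(2)[OF assms(1) q(3)] .
  with assms(3) have "\<forall>\<^sub>F k in sequentially. 0 \<le> b k ^ (k - 1) \<and> b k ^ (k - 1) \<le> q ^ (k - 1)"
    by eventually_elim (auto intro: power_mono)
  then show ?thesis
    by (intro tendsto_sandwich[OF _ _ tendsto_const lim_q]) (auto elim: eventually_mono)
qed

lemma majorised_orbit_tendsto_zero:
  fixes s :: "nat \<Rightarrow> real" and F :: "real \<Rightarrow> real"
  assumes "0 \<le> s 0" "s 0 \<le> 1"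
    and step: "\<And>i. 0 \<le> s i \<Longrightarrow> s i \<le> 1 \<Longrightarrow> 0 \<le> s (Suc i) \<and> s (Suc i) \<le> F (s i)"
    and cont: "\<And>x. isCont F x"
    and below: "\<And>x. 0 \<le> x \<Longrightarrow> x \<le> 1 \<Longrightarrow> F x \<le> x"
    and strict: "\<And>x. 0 < x \<Longrightarrow> x \<le> 1 \<Longrightarrow> F x < x"
  shows "s \<longlonglongrightarrow> 0"
proof -
  have inv: "0 \<le> s i \<and> s i \<le> 1" for i
    by (induction i) (use assms step below in \<open>fastforce+\<close>)
  have dec: "decseq s"
    using step inv below by (intro decseq_SucI) (meson order_trans)
  obtain L where L: "s \<longlonglongrightarrow> L" "\<forall>i. L \<le> s i"
    using decseq_convergent[OF dec, of 0] inv by auto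
  have "L \<le> s 0" using L(2) by simp
  then have L1: "L \<le> 1" using inv[of 0] by linarith
  have L0: "0 \<le> L" using LIMSEQ_le_const[OF L(1)] inv by auto
  have "(\<lambda>i. s (Suc i)) \<longlonglongrightarrow> L" using L(1) by (rule LIMSEQ_Suc)
  moreover have "(\<lambda>i. F (s i)) \<longlonglongrightarrow> F L" using L(1) cont by (rule isCont_tendsto_compose[rotated])
  ultimately have "L \<le> F L" using step inv by (intro LIMSEQ_le) auto
  then have "L = 0" using strict[of L] L0 L1 by force
  then show ?thesis using L(1) by simp
qed

section \<open>Below the threshold: decoding succeeds\<close>

lemma lm2_step_rescaled_le:
  assumes j: "3 \<le> j" and c: "0 < c" "c < c'"
    and k: "2 * c \<le> real k" "2 * c\<^sup>2 \<le> real k * (c' - c)" "c < real k"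
    and s: "0 \<le> s" "s \<le> 1"
  defines "\<delta> \<equiv> c / real k"
  shows "0 \<le> lm2_step j k \<delta> (\<delta> * s)"
    and "lm2_step j k \<delta> (\<delta> * s) \<le> \<delta> * phi j (1 - exp (- c' * s))"
proof -
  have \<delta>: "0 < \<delta>" "\<delta> < 1" using c k by (auto simp: \<delta>_def field_simps)
  have x: "0 \<le> \<delta> * s" "\<delta> * s \<le> \<delta>" using s \<delta> by (simp_all add: mult_left_le)
  note b = lm2_step_bounds[where j = j and k = k, OF \<delta> x refl refl]
  show "0 \<le> lm2_step j k \<delta> (\<delta> * s)" by (rule b(6))
  have "exp (- c' * s) \<le> (1 - \<delta> * s) ^ (k - 1)"
    using one_minus_power_le_exp[OF c k(1,2) s] by (simp add: \<delta>_def)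
  then have "phi j (1 - (1 - \<delta> * s) ^ (k - 1)) \<le> phi j (1 - exp (- c' * s))"
    using b(1) by (intro phi_mono[OF j]) auto
  then have "\<delta> * phi j (1 - (1 - \<delta> * s) ^ (k - 1)) \<le> \<delta> * phi j (1 - exp (- c' * s))"
    using \<delta>(1) by simp
  then show "lm2_step j k \<delta> (\<delta> * s) \<le> \<delta> * phi j (1 - exp (- c' * s))"
    using b(4) by linarith
qed

lemma lm2_tendsto_zero_below_threshold:
  assumes j: "3 \<le> j" and \<alpha>: "0 < \<alpha>" "\<alpha> < a" and adm: "admissible j a"
  shows "\<exists>K1::nat. \<forall>k::nat. k \<ge> K1 \<and> real k > \<alpha> * real j \<longrightarrow>
           (\<lambda>i. lm2_seq j k (\<alpha> * real j / real k) i) \<longlonglongrightarrow> 0"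
proof -
  define c where "c = \<alpha> * real j"
  define c' where "c' = (\<alpha> + a) / 2 * real j"
  have c: "0 < c" "c < c'" "c' < a * real j" using \<alpha> j by (auto simp: c_def c'_def)
  text \<open>The limit map with the slightly larger exponent \<open>c'\<close> is still below the diagonal.\<close>
  define F where "F s = phi j (1 - exp (- c' * s))" for s
  have F_strict: "F s < s" if "0 < s" "s \<le> 1" for s
  proof -
    have "F s < phi j (1 - exp (- a * real j * s))"
      unfolding F_def using c that by (intro phi_strict_mono[OF j]) auto
    also have "\<dots> \<le> s" using adm that by (auto simp: admissible_def)
    finally show ?thesis .
  qed
  have F_below: "F s \<le> s" if "0 \<le> s" "s \<le> 1" for s
    using F_strict[of s] that phi_0[OF j] by (cases "s = 0") (auto simp: F_def)
  have F_cont: "isCont F s" for s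
    unfolding F_def phi_def lam_def lam'_def by (intro continuous_intros)
  show ?thesis
  proof (intro exI allI impI, elim conjE)
    fix k :: nat
    assume K: "nat \<lceil>2 * c + 2 * c\<^sup>2 / (c' - c)\<rceil> \<le> k" and "\<alpha> * real j < real k"
    then have K': "2 * c + 2 * c\<^sup>2 / (c' - c) \<le> real k" and kc: "c < real k"
      by (linarith, simp add: c_def)
    have "0 \<le> 2 * c\<^sup>2 / (c' - c)" using c by simp
    then have k1: "2 * c \<le> real k" and "2 * c\<^sup>2 / (c' - c) \<le> real k"
      using K' c(1) by linarith+
    then have "2 * c\<^sup>2 \<le> real k * (c' - c)"
      using c by (simp add: pos_divide_le_eq mult.commute)
    note k = k1 this kc
    define \<delta> where "\<delta> = c / real k"
    have \<delta>: "0 < \<delta>" "\<delta> < 1" using c k by (auto simp: \<delta>_def field_simps)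
    define s where "s i = lm2_seq j k \<delta> i / \<delta>" for i
    have step: "0 \<le> s (Suc i) \<and> s (Suc i) \<le> F (s i)" if "0 \<le> s i" "s i \<le> 1" for i
    proof -
      have s_Suc: "s (Suc i) = lm2_step j k \<delta> (\<delta> * s i) / \<delta>" using \<delta> by (simp add: s_def)
      have "0 \<le> lm2_step j k \<delta> (\<delta> * s i)" "lm2_step j k \<delta> (\<delta> * s i) \<le> \<delta> * F (s i)"
        using lm2_step_rescaled_le[OF j c(1,2) k that] unfolding \<delta>_def[symmetric] F_def .
      then show ?thesis
        using \<delta>(1) by (simp add: s_Suc pos_divide_le_eq mult.commute)
    qed
    have "s 0 = 1" using \<delta>(1) by (simp add: s_def)
    then have "s \<longlonglongrightarrow> 0"
      by (intro majorised_orbit_tendsto_zero[of s F, OF _ _ step F_cont F_below F_strict]) auto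
    then have "(\<lambda>i. \<delta> * s i) \<longlonglongrightarrow> 0" by (rule tendsto_mult_right_zero)
    moreover have "(\<lambda>i. \<delta> * s i) = lm2_seq j k \<delta>" using \<delta>(1) by (auto simp: s_def)
    ultimately show "(\<lambda>i. lm2_seq j k (\<alpha> * real j / real k) i) \<longlonglongrightarrow> 0"
      by (simp add: \<delta>_def c_def)
  qed
qed

section \<open>Above the threshold: decoding fails\<close>

text \<open>A trapping region: if the one-step lower bound evaluated at the worst point
  \<open>x = \<delta> s0\<close> (with \<open>x\<close> dropped from \<open>w\<close>) exceeds \<open>\<delta> s0\<close>, the orbit never goes below \<open>\<delta> s0\<close>.\<close>
lemma lm2_orbit_trapped:
  assumes j: "3 \<le> j" and \<delta>: "0 < \<delta>" "\<delta> < 1" and s0: "0 < s0" "s0 \<le> 1"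
    and y0: "y0 = 1 - (1 - \<delta> * s0) ^ (k - 1)" and b: "b = 1 - (1 - \<delta>) * lam j y0"
    and above: "s0 < phi j y0 - real (j - 1) * b ^ (k - 1)"
  shows "\<delta> * s0 \<le> lm2_seq j k \<delta> i \<and> lm2_seq j k \<delta> i \<le> \<delta>"
proof (induction i)
  case 0
  show ?case using \<delta> s0 by (simp add: mult_left_le)
next
  case (Suc i)
  define x where "x = lm2_seq j k \<delta> i"
  have x: "\<delta> * s0 \<le> x" "x \<le> \<delta>" using Suc by (simp_all add: x_def)
  have "0 < \<delta> * s0" using \<delta> s0 by simp
  then have "0 \<le> x" using x(1) by linarith
  define y where "y = 1 - (1 - x) ^ (k - 1)"
  define w where "w = 1 - (1 - \<delta>) * lam j y - x"
  note bounds = lm2_step_bounds[OF \<delta> \<open>0 \<le> x\<close> x(2) y_def w_def]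
  have "(1 - x) ^ (k - 1) \<le> (1 - \<delta> * s0) ^ (k - 1)"
    using x \<delta> by (intro power_mono) auto
  then have "y0 \<le> y" by (simp add: y0 y_def)
  have "0 \<le> 1 - \<delta> * s0" "1 - \<delta> * s0 \<le> 1" using x \<delta> \<open>0 < \<delta> * s0\<close> by linarith+
  then have "0 \<le> y0" unfolding y0 by (simp add: power_le_one)
  have "phi j y0 \<le> phi j y"
    using \<open>0 \<le> y0\<close> \<open>y0 \<le> y\<close> bounds(2) by (rule phi_mono[OF j])
  moreover have "lam j y0 \<le> lam j y"
    using \<open>y0 \<le> y\<close> \<open>0 \<le> y0\<close> by (simp add: lam_def power_mono)
  then have "(1 - \<delta>) * lam j y0 \<le> (1 - \<delta>) * lam j y" using \<delta>(2) by (simp add: mult_left_mono)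
  then have "w \<le> b" using \<open>0 \<le> x\<close> by (simp add: w_def b)
  then have "w ^ (k - 1) \<le> b ^ (k - 1)" using bounds(3) by (simp add: power_mono)
  then have "real (j - 1) * w ^ (k - 1) \<le> real (j - 1) * b ^ (k - 1)" by (simp add: mult_left_mono)
  ultimately have "s0 < phi j y - real (j - 1) * w ^ (k - 1)" using above by linarith
  then have "\<delta> * s0 < \<delta> * (phi j y - real (j - 1) * w ^ (k - 1))" using \<delta>(1) by simp
  also have "\<dots> \<le> lm2_seq j k \<delta> (Suc i)" using bounds(5) by (simp add: x_def)
  finally have "\<delta> * s0 < lm2_seq j k \<delta> (Suc i)" .
  moreover have "\<delta> * phi j y \<le> \<delta>"
    using phi_le_1[OF j bounds(1,2)] \<delta>(1) by (simp add: mult_left_le)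
  then have "lm2_seq j k \<delta> (Suc i) \<le> \<delta>" using bounds(4) by (simp add: x_def)
  ultimately show ?case by simp
qed

text \<open>If the limit map exceeds the diagonal at \<open>s0\<close>, the trapping condition at \<open>\<delta> = c/k\<close> holds for
  all large \<open>k\<close>, because \<open>y0 \<rightarrow> 1 - exp(-c s0)\<close> while \<open>b\<close> stays below 1, so \<open>b^(k-1) \<rightarrow> 0\<close>.\<close>
lemma lm2_trap_condition_eventually:
  assumes c: "0 < c" and s0: "0 < s0" "s0 \<le> 1" "s0 < phi j (1 - exp (- (c * s0)))"
  shows "\<forall>\<^sub>F k in sequentially. s0 < phi j (1 - (1 - c / real k * s0) ^ (k - 1))
           - real (j - 1) * (1 - (1 - c / real k) * lam j (1 - (1 - c / real k * s0) ^ (k - 1))) ^ (k - 1)"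
proof -
  define y0 where "y0 k = 1 - (1 - c / real k * s0) ^ (k - 1)" for k :: nat
  define b where "b k = 1 - (1 - c / real k) * lam j (y0 k)" for k :: nat
  define Y where "Y = 1 - exp (- (c * s0))"
  have "0 < Y" using c s0 by (simp add: Y_def)
  have lim_y0: "y0 \<longlonglongrightarrow> Y"
    unfolding y0_def Y_def using one_minus_over_power_limit[of "c * s0"]
    by (intro tendsto_intros) (simp add: mult.commute)
  have "b \<longlonglongrightarrow> 1 - (1 - 0) * Y ^ (j - 1)"
    unfolding b_def lam_def by (intro tendsto_intros lim_y0 lim_const_over_n)
  then have "b \<longlonglongrightarrow> 1 - Y ^ (j - 1)" by simp
  moreover have "1 - Y ^ (j - 1) < 1" using \<open>0 < Y\<close> by simp
  moreover have "\<forall>\<^sub>F k in sequentially. 0 \<le> b k"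
  proof -
    have "\<forall>\<^sub>F k in sequentially. c < real k"
      using filterlim_real_sequentially by (simp add: filterlim_at_top_dense)
    then show ?thesis
    proof eventually_elim
      case (elim k)
      then have "0 \<le> 1 - c / real k * s0" "1 - c / real k * s0 \<le> 1"
        "0 \<le> 1 - c / real k" "1 - c / real k \<le> 1"
        using c s0 by (auto simp: field_simps intro: order_trans[of _ c])
      then have "0 \<le> y0 k" "y0 k \<le> 1" by (simp_all add: y0_def power_le_one)
      then have "lam j (y0 k) \<le> 1" by (simp add: lam_def power_le_one)
      then show ?case using \<open>0 \<le> 1 - c / real k\<close> \<open>1 - c / real k \<le> 1\<close> \<open>0 \<le> y0 k\<close>
        by (simp add: b_def mult_le_one lam_def)
    qed
  qed
  ultimately have "(\<lambda>k. b k ^ (k - 1)) \<longlonglongrightarrow> 0" by (rule power_diag_tendsto_zero)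
  then have "(\<lambda>k. phi j (y0 k) - real (j - 1) * b k ^ (k - 1)) \<longlonglongrightarrow> phi j Y - real (j - 1) * 0"
    by (intro tendsto_intros lim_y0)
  moreover have "s0 < phi j Y" using s0(3) by (simp add: Y_def)
  ultimately have "\<forall>\<^sub>F k in sequentially. s0 < phi j (y0 k) - real (j - 1) * b k ^ (k - 1)"
    by (simp add: order_tendstoD(1))
  then show ?thesis by (simp only: y0_def b_def)
qed

text \<open>Part (b): the orbit is trapped above \<open>\<delta> s0\<close> for all large \<open>k\<close>, so it cannot tend to 0.\<close>
lemma lm2_not_tendsto_zero_above_threshold:
  assumes j: "3 \<le> j" and \<alpha>: "0 < \<alpha>"
    and s0: "0 < s0" "s0 \<le> 1" "s0 < phi j (1 - exp (- \<alpha> * real j * s0))"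
  shows "\<exists>K2::nat. \<forall>k::nat. k \<ge> K2 \<and> real k > \<alpha> * real j \<longrightarrow>
           \<not> (\<lambda>i. lm2_seq j k (\<alpha> * real j / real k) i) \<longlonglongrightarrow> 0"
proof -
  define c where "c = \<alpha> * real j"
  have c: "0 < c" using \<alpha> j by (simp add: c_def)
  have "s0 < phi j (1 - exp (- (c * s0)))" using s0(3) by (simp add: c_def)
  then obtain K2 where K2: "\<And>k. K2 \<le> k \<Longrightarrow> s0 < phi j (1 - (1 - c / real k * s0) ^ (k - 1))
      - real (j - 1) * (1 - (1 - c / real k) * lam j (1 - (1 - c / real k * s0) ^ (k - 1))) ^ (k - 1)"
    using lm2_trap_condition_eventually[OF c s0(1,2)] unfolding eventually_sequentially by blast
  show ?thesis
  proof (intro exI allI impI notI, elim conjE)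
    fix k :: nat
    assume "K2 \<le> k" "\<alpha> * real j < real k"
      and lim: "(\<lambda>i. lm2_seq j k (\<alpha> * real j / real k) i) \<longlonglongrightarrow> 0"
    define \<delta> where "\<delta> = c / real k"
    have \<delta>: "0 < \<delta>" "\<delta> < 1" using c \<open>\<alpha> * real j < real k\<close> by (auto simp: \<delta>_def c_def)
    have trapped: "\<delta> * s0 \<le> lm2_seq j k \<delta> i" for i
      using lm2_orbit_trapped[OF j \<delta> s0(1,2) refl refl] K2[OF \<open>K2 \<le> k\<close>]
      by (simp add: \<delta>_def)
    have "\<delta> * s0 \<le> 0"
      using lim trapped by (intro LIMSEQ_le_const) (auto simp: \<delta>_def c_def)
    then show False using \<delta>(1) s0(1) by (simp add: mult_le_0_iff)
  qed
qed

theorem theorem4: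
  fixes j :: nat and \<alpha> :: real
  assumes "j \<ge> 3" and "\<alpha> > 0"
  shows "(\<alpha> < alpha_bar j \<longrightarrow>
            (\<exists>K1::nat. \<forall>k::nat. k \<ge> K1 \<and> real k > \<alpha> * real j \<longrightarrow>
               (\<lambda>i. lm2_seq j k (\<alpha> * real j / real k) i) \<longlonglongrightarrow> 0))
       \<and> (\<alpha> > alpha_bar j \<longrightarrow>
            (\<exists>K2::nat. \<forall>k::nat. k \<ge> K2 \<and> real k > \<alpha> * real j \<longrightarrow>
               \<not> ((\<lambda>i. lm2_seq j k (\<alpha> * real j / real k) i) \<longlonglongrightarrow> 0)))"
proof (intro conjI impI)
  assume "\<alpha> < alpha_bar j"
  then show "\<exists>K1::nat. \<forall>k::nat. k \<ge> K1 \<and> real k > \<alpha> * real j \<longrightarrow>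
               (\<lambda>i. lm2_seq j k (\<alpha> * real j / real k) i) \<longlonglongrightarrow> 0"
    using lm2_tendsto_zero_below_threshold[OF assms] alpha_bar_greatest(1)[OF assms(1)] by blast
next
  assume "\<alpha> > alpha_bar j"
  then have "\<not> admissible j \<alpha>" using alpha_bar_greatest(2)[OF assms(1)] by force
  then obtain s0 where "0 < s0" "s0 \<le> 1" "s0 < phi j (1 - exp (- \<alpha> * real j * s0))"
    using assms(2) by (auto simp: admissible_def not_le)
  then show "\<exists>K2::nat. \<forall>k::nat. k \<ge> K2 \<and> real k > \<alpha> * real j \<longrightarrow>
               \<not> ((\<lambda>i. lm2_seq j k (\<alpha> * real j / real k) i) \<longlonglongrightarrow> 0)"
    by (rule lm2_not_tendsto_zero_above_threshold[OF assms])
qed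

end
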